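(* Let $b\ge2$ be an integer and let $w$ be a fixed block of $b$-ary digits of length $p\ge1$. Let $s$ be any string of $b$-ary digits of length $\ell\ge0$. Let $$k_w^*(s)=\max_{|z|=p-1}k_w(sz),$$ where the maximum is over all strings $z$ of length $p-1$. Then for every integer $k\ge 1+k_w^*(s)$, $$\sum_{X:\;k_w(X)=k,\ X\text{ has prefix }s} b^{-|X|}=b^{p}\,b^{-\ell}.$$ In particular, for every $k\ge1$, $$Z_w(k)(b^{-1})=\sum_{X:\,k_w(X)=k}b^{-|X|}=b^p.$$
   Context: Strings are finite sequences over $\{0,\dots,b-1\}$, including the empty string $\epsilon$. $|X|$ is the length of $X$, and $sz$ is concatenation. $k_w(X)$ is the number of possibly overlapping occurrences of $w$ in $X$: indices $i$ with $x_i\dots x_{i+p-1}=w$. A string $X$ is $k$-admissible if $k_w(X)=k$. $N_w(k,l)$ is the number of $k$-admissible strings of length $l$, and $Z_w(k)=\sum_{l\ge0}N_w(k,l)t^l$. *)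

theory Defs
  imports "HOL-Analysis.Analysis"
begin

definition strings :: "nat \<Rightarrow> nat list set" where
  "strings b = {X. set X \<subseteq> {0..<b}}"

definition occ :: "nat list \<Rightarrow> nat list \<Rightarrow> nat" where
  "occ w X = card {i. i + length w \<le> length X \<and> take (length w) (drop i X) = w}"

definition kstar :: "nat \<Rightarrow> nat list \<Rightarrow> nat list \<Rightarrow> nat" where
  "kstar b w s = Max {occ w (s @ z) | z. z \<in> strings b \<and> length z = length w - 1}"

definition Nw :: "nat \<Rightarrow> nat list \<Rightarrow> nat \<Rightarrow> nat \<Rightarrow> nat" where
  "Nw b w k l = card {X \<in> strings b. length X = l \<and> occ w X = k}"

definition Zw :: "nat \<Rightarrow> nat list \<Rightarrow> nat \<Rightarrow> real \<Rightarrow> real" where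
  "Zw b w k t = (\<Sum>l. real (Nw b w k l) * t ^ l)"

end

theory Submission
  imports Defs "HOL-Library.Sublist"
begin

(* Append uniformly random letters to s.  Cutting a string after its last occurrence of w writes
   the weight of the strings with exactly k occurrences as the convolution of h_t, the probability
   that the k-th occurrence is completed by the t-th letter, with beta_n, the probability that n
   letters written after an occurrence of w complete no further one.  For k > k_w(s), which is all
   that the hypothesis on k*_w(s) is used for, the k-th occurrence comes almost surely, so
   sum h_t = 1.  Cutting the strings w a in the same way gives the renewal identity
     1 = beta_n + sum_{t=1..n} P(w a ends with w, |a| = t) beta_{n-t},
   whose coefficients equal b^-p once t >= p; letting n -> oo yields sum beta_n = b^p, the mean
   recurrence time of w.  So the total weight is b^p, and the prefix s contributes b^-|s|. *)

lemma suffix_append_iff_long: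
  assumes "length w \<le> length V"
  shows "suffix w (Y @ V) \<longleftrightarrow> suffix w V"
  using assms suffix_length_suffix[of w "Y @ V" V] by (auto intro: suffix_appendI)

lemma suffix_iff_drop: "suffix w Z \<longleftrightarrow> length w \<le> length Z \<and> drop (length Z - length w) Z = w"
  by (metis suffix_drop suffix_length_le suffix_take append_eq_conv_conj diff_diff_cancel length_drop)

lemma occ_Nil [simp]: "w \<noteq> [] \<Longrightarrow> occ w [] = 0"
  unfolding occ_def by simp

lemma occ_le_occ_append: "occ w X \<le> occ w (X @ u)"
  unfolding occ_def
  by (rule card_mono) (auto intro: finite_subset[of _ "{..length (X @ u)}"])

lemma occ_snoc:
  assumes "w \<noteq> []"
  shows "occ w (X @ [x]) = occ w X + (if suffix w (X @ [x]) then 1 else 0)"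
proof -
  let ?p = "length w"
  let ?pos = "\<lambda>Z. {i. i + ?p \<le> length Z \<and> take ?p (drop i Z) = w}"
  let ?last = "if suffix w (X @ [x]) then {Suc (length X) - ?p} else {}"
  have "?pos (X @ [x]) = ?pos X \<union> ?last"
  proof (intro set_eqI iffI)
    fix i assume i: "i \<in> ?pos (X @ [x])"
    show "i \<in> ?pos X \<union> ?last"
    proof (cases "i + ?p \<le> length X")
      case True
      then show ?thesis using i by auto
    next
      case False
      with i have "i = Suc (length X) - ?p" "take ?p (drop i (X @ [x])) = drop i (X @ [x])" by auto
      then show ?thesis using i by (auto simp: suffix_iff_drop)
    qed
  qed (auto simp: suffix_iff_drop split: if_splits)
  moreover have "finite (?pos X)" by (rule finite_subset[of _ "{..length X}"]) auto
  moreover have "?pos X \<inter> ?last = {}" using assms by auto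
  ultimately show ?thesis unfolding occ_def by (simp add: card_Un_disjoint)
qed

lemma occ_less_of_suffix:
  assumes "w \<noteq> []" "suffix w (X @ a)" "a \<noteq> []"
  shows "occ w X < occ w (X @ a)"
proof -
  obtain a' x where a: "a = a' @ [x]" using assms(3) by (cases a rule: rev_cases) auto
  have "occ w X \<le> occ w (X @ a')" by (rule occ_le_occ_append)
  also have "\<dots> < occ w (X @ a)" using occ_snoc[OF assms(1), of "X @ a'" x] assms(2) a by simp
  finally show ?thesis .
qed

lemma occ_append_after_suffix:
  assumes "w \<noteq> []" "suffix w Z"
  shows "occ w (Z @ u) + occ w w = occ w Z + occ w (w @ u)"
proof (induction u rule: rev_induct)
  case (snoc x u)
  obtain Y where "Z = Y @ w" using assms(2) by (auto elim: suffixE)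
  then have "suffix w (Z @ u @ [x]) \<longleftrightarrow> suffix w (w @ u @ [x])"
    using suffix_append_iff_long[of w "w @ u @ [x]" Y] by simp
  then show ?case using snoc occ_snoc[OF assms(1), of "Z @ u" x] occ_snoc[OF assms(1), of "w @ u" x]
    by auto
qed simp

lemma last_occurrence_exists:
  assumes "w \<noteq> []"
  shows "occ w (X @ u) = occ w X \<or>
    (\<exists>a c. u = a @ c \<and> a \<noteq> [] \<and> suffix w (X @ a) \<and> occ w (w @ c) = occ w w)"
proof (induction u rule: rev_induct)
  case (snoc x u)
  show ?case
  proof (cases "suffix w (X @ u @ [x])")
    case True
    then show ?thesis by (intro disjI2 exI[of _ "u @ [x]"] exI[of _ "[]"]) simp
  next
    case False
    then have occ_eq: "occ w (X @ u @ [x]) = occ w (X @ u)"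
      using occ_snoc[OF assms, of "X @ u" x] by simp
    from snoc show ?thesis
    proof
      assume "occ w (X @ u) = occ w X"
      then show ?thesis using occ_eq by simp
    next
      assume "\<exists>a c. u = a @ c \<and> a \<noteq> [] \<and> suffix w (X @ a) \<and> occ w (w @ c) = occ w w"
      then obtain a c where u: "u = a @ c" "a \<noteq> []" "suffix w (X @ a)" "occ w (w @ c) = occ w w"
        by blast
      obtain Y where "X @ a = Y @ w" using u(3) by (auto elim: suffixE)
      then have "X @ u @ [x] = Y @ w @ c @ [x]" using u(1) by (metis append.assoc)
      then have "\<not> suffix w (Y @ w @ c @ [x])" using False by metis
      then have "\<not> suffix w (w @ c @ [x])"
        using suffix_append_iff_long[of w "w @ c @ [x]" Y] by simp
      then have "occ w (w @ c @ [x]) = occ w w" using occ_snoc[OF assms, of "w @ c" x] u(4) by simp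
      then show ?thesis using u by (intro disjI2 exI[of _ a] exI[of _ "c @ [x]"]) simp
    qed
  qed
qed simp

lemma no_suffix_after_last_occurrence:
  assumes "w \<noteq> []" "suffix w Z" "occ w (w @ c) = occ w w" "prefix d c" "d \<noteq> []"
  shows "\<not> suffix w (Z @ d)"
proof
  assume "suffix w (Z @ d)"
  then have "occ w Z < occ w (Z @ d)" by (rule occ_less_of_suffix[OF assms(1) _ assms(5)])
  moreover obtain e where "c = d @ e" using assms(4) by (auto elim: prefixE)
  then have "occ w (Z @ d) \<le> occ w (Z @ c)" using occ_le_occ_append[of w "Z @ d" e] by simp
  moreover have "occ w (Z @ c) = occ w Z"
    using occ_append_after_suffix[OF assms(1,2), of c] assms(3) by simp
  ultimately show False by simp
qed

lemma last_occurrence_unique: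
  assumes "w \<noteq> []" "s \<le> length u" "t \<le> length u"
    and "suffix w (X @ take s u)" "occ w (w @ drop s u) = occ w w"
    and "suffix w (X @ take t u)" "occ w (w @ drop t u) = occ w w"
  shows "s = t"
proof -
  have False if "s < t" "t \<le> length u" "suffix w (X @ take s u)"
    "occ w (w @ drop s u) = occ w w" "suffix w (X @ take t u)" for s t
  proof -
    let ?d = "take (t - s) (drop s u)"
    have "\<not> suffix w ((X @ take s u) @ ?d)"
      using that by (intro no_suffix_after_last_occurrence[OF assms(1)]) (auto simp: take_is_prefix)
    moreover have "X @ take t u = (X @ take s u) @ ?d"
      using take_add[of s "t - s" u] that(1) by simp
    ultimately show False using that(5) by simp
  qed
  then show ?thesis using assms by (cases s t rule: linorder_cases) auto
qed

lemma occ_in_iff_last_occurrence: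
  assumes "w \<noteq> []"
  shows "occ w (X @ u) \<in> K \<longleftrightarrow> (occ w (X @ u) = occ w X \<and> occ w X \<in> K) \<or>
    (\<exists>t\<in>{1..length u}. suffix w (X @ take t u) \<and> occ w (X @ take t u) \<in> K
                      \<and> occ w (w @ drop t u) = occ w w)"
proof -
  have after: "occ w (X @ u) = occ w (X @ take t u)"
    if "suffix w (X @ take t u)" "occ w (w @ drop t u) = occ w w" for t
    using occ_append_after_suffix[OF assms that(1), of "drop t u"] that(2) by simp
  show ?thesis
  proof
    assume K: "occ w (X @ u) \<in> K"
    from last_occurrence_exists[OF assms, of X u] show "(occ w (X @ u) = occ w X \<and> occ w X \<in> K) \<or>
      (\<exists>t\<in>{1..length u}. suffix w (X @ take t u) \<and> occ w (X @ take t u) \<in> K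
                        \<and> occ w (w @ drop t u) = occ w w)"
    proof
      assume "\<exists>a c. u = a @ c \<and> a \<noteq> [] \<and> suffix w (X @ a) \<and> occ w (w @ c) = occ w w"
      then obtain a c where "u = a @ c" "a \<noteq> []" "suffix w (X @ a)" "occ w (w @ c) = occ w w"
        by blast
      moreover have "length a \<in> {1..length u}" using \<open>u = a @ c\<close> \<open>a \<noteq> []\<close> by (cases a) auto
      ultimately show ?thesis using K after[of "length a"] by (intro disjI2 bexI[of _ "length a"]) auto
    qed (use K in simp)
  qed (use after in auto)
qed

lemma no_occurrence_excludes_last_occurrence:
  assumes "w \<noteq> []" "occ w (X @ u) = occ w X" "t \<in> {1..length u}"
  shows "\<not> suffix w (X @ take t u)"
proof
  assume "suffix w (X @ take t u)"
  then have "occ w X < occ w (X @ take t u)"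
    using assms(3) by (intro occ_less_of_suffix[OF assms(1)]) auto
  also have "\<dots> \<le> occ w (X @ u)"
    using occ_le_occ_append[of w "X @ take t u" "drop t u"] by simp
  finally show False using assms(2) by simp
qed

definition words :: "nat \<Rightarrow> nat \<Rightarrow> nat list set" where
  "words b m = {u \<in> strings b. length u = m}"

lemma finite_words [simp]: "finite (words b m)"
  unfolding words_def strings_def using finite_lists_length_eq[of "{0..<b}" m] by simp

lemma card_words: "card (words b m) = b ^ m"
  unfolding words_def strings_def using card_lists_length_eq[of "{0..<b}" m] by simp

definition word_prob :: "nat \<Rightarrow> nat \<Rightarrow> (nat list \<Rightarrow> bool) \<Rightarrow> real" where
  "word_prob b m P = real (card {u \<in> words b m. P u}) / real b ^ m"

lemma word_prob_nonneg: "0 \<le> word_prob b m P"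
  unfolding word_prob_def by simp

lemma word_prob_le_one:
  assumes "0 < b"
  shows "word_prob b m P \<le> 1"
proof -
  have "card {u \<in> words b m. P u} \<le> b ^ m"
    using card_mono[of "words b m" "{u \<in> words b m. P u}"] by (simp add: card_words)
  then show ?thesis using assms unfolding word_prob_def by (simp flip: of_nat_power)
qed

lemma word_prob_True:
  assumes "0 < b"
  shows "word_prob b m (\<lambda>_. True) = 1"
  using assms unfolding word_prob_def by (simp add: card_words)

lemma word_prob_False: "word_prob b m (\<lambda>_. False) = 0"
  unfolding word_prob_def by simp

lemma word_prob_cong:
  "(\<And>u. u \<in> words b m \<Longrightarrow> P u \<longleftrightarrow> Q u) \<Longrightarrow> word_prob b m P = word_prob b m Q"
  unfolding word_prob_def by (metis (mono_tags, lifting) Collect_cong)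

lemma word_prob_disj:
  assumes "\<And>u. u \<in> words b m \<Longrightarrow> \<not> (P u \<and> Q u)"
  shows "word_prob b m (\<lambda>u. P u \<or> Q u) = word_prob b m P + word_prob b m Q"
proof -
  have "{u \<in> words b m. P u \<or> Q u} = {u \<in> words b m. P u} \<union> {u \<in> words b m. Q u}" by auto
  moreover have "card \<dots> = card {u \<in> words b m. P u} + card {u \<in> words b m. Q u}"
    using assms by (intro card_Un_disjoint) auto
  ultimately show ?thesis unfolding word_prob_def by (simp add: add_divide_distrib)
qed

lemma word_prob_Bex:
  assumes "finite T"
    and "\<And>s t u. s \<in> T \<Longrightarrow> t \<in> T \<Longrightarrow> s \<noteq> t \<Longrightarrow> u \<in> words b m \<Longrightarrow> \<not> (P s u \<and> P t u)"
  shows "word_prob b m (\<lambda>u. \<exists>t\<in>T. P t u) = (\<Sum>t\<in>T. word_prob b m (P t))"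
  using assms
proof (induction T rule: finite_induct)
  case (insert s T)
  have "word_prob b m (\<lambda>u. \<exists>t\<in>insert s T. P t u) = word_prob b m (\<lambda>u. P s u \<or> (\<exists>t\<in>T. P t u))"
    by simp
  also have "\<dots> = word_prob b m (P s) + word_prob b m (\<lambda>u. \<exists>t\<in>T. P t u)"
    using insert.hyps(2) insert.prems by (intro word_prob_disj) blast
  finally show ?case using insert by simp
qed (simp add: word_prob_False)

lemma word_prob_append:
  "word_prob b (t + n) (\<lambda>u. P (take t u) \<and> Q (drop t u)) = word_prob b t P * word_prob b n Q"
proof -
  let ?A = "{a \<in> words b t. P a}" and ?C = "{c \<in> words b n. Q c}"
  have "{u \<in> words b (t + n). P (take t u) \<and> Q (drop t u)} = (\<lambda>(a, c). a @ c) ` (?A \<times> ?C)"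
  proof (intro set_eqI iffI)
    fix u assume "u \<in> {u \<in> words b (t + n). P (take t u) \<and> Q (drop t u)}"
    then show "u \<in> (\<lambda>(a, c). a @ c) ` (?A \<times> ?C)"
      unfolding words_def strings_def
      by (intro image_eqI[of _ _ "(take t u, drop t u)"])
         (auto dest: in_set_takeD in_set_dropD)
  qed (force simp: words_def strings_def)
  moreover have "inj_on (\<lambda>(a, c). a @ c) (?A \<times> ?C)"
    by (auto simp: inj_on_def words_def)
  ultimately have "card {u \<in> words b (t + n). P (take t u) \<and> Q (drop t u)} = card ?A * card ?C"
    by (simp add: card_image card_cartesian_product)
  then show ?thesis unfolding word_prob_def by (simp add: power_add)
qed

lemma word_prob_Nil: "word_prob b 0 P = (if P [] then 1 else 0)"
proof -
  have "{u \<in> words b 0. P u} = (if P [] then {[]} else {})" by (auto simp: words_def strings_def)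
  then show ?thesis unfolding word_prob_def by simp
qed

lemma word_prob_eq_word:
  assumes "v \<in> words b m"
  shows "word_prob b m (\<lambda>u. u = v) = 1 / real b ^ m"
proof -
  have "{u \<in> words b m. u = v} = {v}" using assms by auto
  then show ?thesis unfolding word_prob_def by simp
qed

lemma has_sum_by_fibres:
  fixes g :: "'a \<Rightarrow> real" and \<phi> :: "'a \<Rightarrow> nat"
  assumes finite_fibres: "\<And>m. finite {x \<in> A. \<phi> x = m}"
    and nonneg: "\<And>x. x \<in> A \<Longrightarrow> 0 \<le> g x"
    and sums: "(\<lambda>m. \<Sum>x\<in>{x \<in> A. \<phi> x = m}. g x) sums T"
  shows "(g has_sum T) A"
proof -
  define F where "F m = {x \<in> A. \<phi> x = m}" for m
  have fibre_sums: "(g has_sum sum g (F m)) (F m)" for m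
    unfolding F_def by (rule has_sum_finite[OF finite_fibres])
  have "((\<lambda>m. sum g (F m)) has_sum T) UNIV"
  proof (rule sums_nonneg_imp_has_sum)
    show "(\<lambda>m. sum g (F m)) sums T" using sums unfolding F_def .
    show "0 \<le> sum g (F m)" for m using nonneg unfolding F_def by (intro sum_nonneg) auto
  qed
  moreover have "(\<lambda>(m, x). g x) summable_on Sigma UNIV F"
    by (rule summable_on_SigmaI[where g = "\<lambda>m. sum g (F m)"])
       (use fibre_sums calculation nonneg in \<open>auto simp: F_def dest: has_sum_imp_summable\<close>)
  ultimately have "((\<lambda>(m, x). g x) has_sum T) (Sigma UNIV F)"
    using fibre_sums by (intro has_sum_SigmaI[where g = "\<lambda>m. sum g (F m)"]) simp_all
  moreover have "inj_on snd (Sigma UNIV F)" "snd ` Sigma UNIV F = A"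
    by (force simp: inj_on_def F_def)+
  ultimately show ?thesis
    using has_sum_reindex[of snd "Sigma UNIV F" g T] by (simp add: comp_def case_prod_unfold)
qed

locale pattern =
  fixes b :: nat and w :: "nat list"
  assumes alphabet_pos: "0 < b" and pattern_word: "w \<in> strings b" and pattern_nonempty: "w \<noteq> []"
begin

(* survival n is beta_n above, i.e. P(T > n) for the waiting time T from one occurrence of w to
   the next; hitting X j t is h_t, the probability that the t-th letter read after X completes an
   occurrence that brings the count to j. *)

definition survival :: "nat \<Rightarrow> real" where
  "survival n = word_prob b n (\<lambda>c. occ w (w @ c) = occ w w)"

definition hitting :: "nat list \<Rightarrow> nat \<Rightarrow> nat \<Rightarrow> real" where
  "hitting X j t = word_prob b t (\<lambda>a. suffix w (X @ a) \<and> occ w (X @ a) = j)"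

lemma last_occurrence_decomposition:
  "word_prob b m (\<lambda>u. occ w (X @ u) \<in> K) =
     (if occ w X \<in> K then word_prob b m (\<lambda>u. occ w (X @ u) = occ w X) else 0)
     + (\<Sum>t=1..m. word_prob b t (\<lambda>a. suffix w (X @ a) \<and> occ w (X @ a) \<in> K) * survival (m - t))"
proof -
  let ?none = "\<lambda>u. occ w (X @ u) = occ w X \<and> occ w X \<in> K"
  let ?last = "\<lambda>t u. suffix w (X @ take t u) \<and> occ w (X @ take t u) \<in> K
                 \<and> occ w (w @ drop t u) = occ w w"
  have split: "occ w (X @ u) \<in> K \<longleftrightarrow> ?none u \<or> (\<exists>t\<in>{1..m}. ?last t u)" if "u \<in> words b m" for u
  proof -
    have "length u = m" using that by (simp add: words_def)
    then show ?thesis using occ_in_iff_last_occurrence[OF pattern_nonempty, of X u K] by simp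
  qed
  have disjoint: "\<not> (?none u \<and> (\<exists>t\<in>{1..m}. ?last t u))" if "u \<in> words b m" for u
    using that no_occurrence_excludes_last_occurrence[OF pattern_nonempty, of X u]
    by (auto simp: words_def)
  have unique: "\<not> (?last s u \<and> ?last t u)"
    if "s \<in> {1..m}" "t \<in> {1..m}" "s \<noteq> t" "u \<in> words b m" for s t u
    using that last_occurrence_unique[OF pattern_nonempty, of s u t X] by (auto simp: words_def)
  have factor: "word_prob b m (?last t) =
      word_prob b t (\<lambda>a. suffix w (X @ a) \<and> occ w (X @ a) \<in> K) * survival (m - t)"
    if "t \<in> {1..m}" for t
    using word_prob_append[of b t "m - t" "\<lambda>a. suffix w (X @ a) \<and> occ w (X @ a) \<in> K"
        "\<lambda>c. occ w (w @ c) = occ w w"] that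
    unfolding survival_def by simp
  have "word_prob b m (\<lambda>u. occ w (X @ u) \<in> K) = word_prob b m (\<lambda>u. ?none u \<or> (\<exists>t\<in>{1..m}. ?last t u))"
    using split by (rule word_prob_cong)
  also have "\<dots> = word_prob b m ?none + word_prob b m (\<lambda>u. \<exists>t\<in>{1..m}. ?last t u)"
    by (rule word_prob_disj[OF disjoint])
  also have "word_prob b m (\<lambda>u. \<exists>t\<in>{1..m}. ?last t u) = (\<Sum>t=1..m. word_prob b m (?last t))"
    by (rule word_prob_Bex[OF finite_atLeastAtMost unique])
  also have "word_prob b m ?none = (if occ w X \<in> K then word_prob b m (\<lambda>u. occ w (X @ u) = occ w X) else 0)"
    by (simp add: word_prob_False)
  also have "(\<Sum>t=1..m. word_prob b m (?last t)) =
      (\<Sum>t=1..m. word_prob b t (\<lambda>a. suffix w (X @ a) \<and> occ w (X @ a) \<in> K) * survival (m - t))"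
    by (rule sum.cong[OF refl factor])
  finally show ?thesis .
qed

lemma suffix_prob:
  assumes "length w \<le> t"
  shows "word_prob b t (\<lambda>a. suffix w (X @ a)) = 1 / real b ^ length w"
proof -
  define n where "n = t - length w"
  then have t: "t = n + length w" using assms by simp
  have "suffix w (X @ a) \<longleftrightarrow> drop n a = w" if "length a = n + length w" for a
  proof -
    have "suffix w (X @ a) \<longleftrightarrow> suffix w a" using that by (intro suffix_append_iff_long) simp
    also have "\<dots> \<longleftrightarrow> drop n a = w" using that by (simp add: suffix_iff_drop)
    finally show ?thesis .
  qed
  then have "word_prob b t (\<lambda>a. suffix w (X @ a)) = word_prob b (n + length w) (\<lambda>a. True \<and> drop n a = w)"
    unfolding t by (intro word_prob_cong) (simp add: words_def)
  also have "\<dots> = word_prob b n (\<lambda>_. True) * word_prob b (length w) (\<lambda>c. c = w)"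
    by (rule word_prob_append)
  also have "\<dots> = 1 / real b ^ length w"
    using pattern_word by (simp add: word_prob_True[OF alphabet_pos] word_prob_eq_word words_def)
  finally show ?thesis .
qed

lemma renewal_identity:
  "word_prob b (n + length w) (\<lambda>u. occ w (X @ u) = occ w X)
   + (\<Sum>t\<in>{1..<length w}. word_prob b t (\<lambda>a. suffix w (X @ a)) * survival (n + length w - t))
   + (\<Sum>i\<le>n. survival i) / real b ^ length w = 1"
proof -
  let ?m = "n + length w" and ?e = "\<lambda>t. word_prob b t (\<lambda>a. suffix w (X @ a))"
  have split: "{1..?m} = {1..<length w} \<union> {length w..?m}"
    using pattern_nonempty by (auto simp: Suc_le_eq intro: less_le_trans[of 0 "length w"])
  have "(\<Sum>t=1..?m. ?e t * survival (?m - t))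
      = (\<Sum>t\<in>{1..<length w}. ?e t * survival (?m - t)) + (\<Sum>t=length w..?m. ?e t * survival (?m - t))"
    unfolding split by (rule sum.union_disjoint) auto
  also have "(\<Sum>t=length w..?m. ?e t * survival (?m - t)) = (\<Sum>t=length w..?m. survival (?m - t)) / real b ^ length w"
    by (simp add: suffix_prob sum_divide_distrib)
  also have "(\<Sum>t=length w..?m. survival (?m - t)) = (\<Sum>i\<le>n. survival i)"
    by (rule sum.reindex_bij_witness[where i="\<lambda>i. ?m - i" and j="\<lambda>t. ?m - t"]) auto
  finally have "(\<Sum>t=1..?m. ?e t * survival (?m - t))
      = (\<Sum>t\<in>{1..<length w}. ?e t * survival (?m - t)) + (\<Sum>i\<le>n. survival i) / real b ^ length w" .
  moreover have "word_prob b ?m (\<lambda>u. occ w (X @ u) \<in> UNIV) = 1"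
    using word_prob_True[OF alphabet_pos] by simp
  ultimately show ?thesis using last_occurrence_decomposition[of ?m X UNIV] by simp
qed

lemma survival_nonneg: "0 \<le> survival n"
  unfolding survival_def by (rule word_prob_nonneg)

lemma summable_survival: "summable survival"
proof (rule summableI_nonneg_bounded[where x = "real b ^ length w"])
  fix n
  have "0 \<le> word_prob b (n + length w) (\<lambda>u. occ w (w @ u) = occ w w)"
    by (rule word_prob_nonneg)
  moreover have "0 \<le> (\<Sum>t\<in>{1..<length w}.
      word_prob b t (\<lambda>a. suffix w (w @ a)) * survival (n + length w - t))"
    by (intro sum_nonneg mult_nonneg_nonneg word_prob_nonneg survival_nonneg)
  ultimately have "(\<Sum>i\<le>n. survival i) / real b ^ length w \<le> 1"
    using renewal_identity[of n w] by linarith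
  then have "(\<Sum>i\<le>n. survival i) \<le> real b ^ length w"
    using alphabet_pos by (simp add: divide_le_eq)
  moreover have "(\<Sum>i<n. survival i) \<le> (\<Sum>i\<le>n. survival i)"
    by (intro sum_mono2) (auto simp: survival_nonneg)
  ultimately show "(\<Sum>i<n. survival i) \<le> real b ^ length w" by simp
qed (rule survival_nonneg)

lemma renewal_remainder_tendsto_zero:
  "(\<lambda>n. \<Sum>t\<in>{1..<length w}. word_prob b t (\<lambda>a. suffix w (X @ a)) * survival (n + length w - t))
     \<longlonglongrightarrow> 0"
proof (intro tendsto_null_sum tendsto_mult_right_zero)
  fix t assume "t \<in> {1..<length w}"
  then have "n + length w - t = n + (length w - t)" for n by simp
  then show "(\<lambda>n. survival (n + length w - t)) \<longlonglongrightarrow> 0"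
    using LIMSEQ_ignore_initial_segment[OF summable_LIMSEQ_zero[OF summable_survival]] by simp
qed

lemma survival_sums: "survival sums real b ^ length w"
proof -
  have "(\<lambda>n. survival (n + length w)) \<longlonglongrightarrow> 0"
    by (rule LIMSEQ_ignore_initial_segment[OF summable_LIMSEQ_zero[OF summable_survival]])
  then have "(\<lambda>n. real b ^ length w * (1 - survival (n + length w)
      - (\<Sum>t\<in>{1..<length w}. word_prob b t (\<lambda>a. suffix w (w @ a)) * survival (n + length w - t))))
      \<longlonglongrightarrow> real b ^ length w * (1 - 0 - 0)"
    by (intro tendsto_intros renewal_remainder_tendsto_zero)
  moreover have "real b ^ length w * (1 - survival (n + length w)
      - (\<Sum>t\<in>{1..<length w}. word_prob b t (\<lambda>a. suffix w (w @ a)) * survival (n + length w - t)))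
      = (\<Sum>i\<le>n. survival i)" for n
    using renewal_identity[of n w] alphabet_pos unfolding survival_def
    by (simp add: field_simps)
  ultimately show ?thesis unfolding sums_def_le by simp
qed

lemma no_new_occurrence_tendsto_zero:
  "(\<lambda>N. word_prob b N (\<lambda>u. occ w (X @ u) = occ w X)) \<longlonglongrightarrow> 0"
proof (rule LIMSEQ_offset[where k = "length w"])
  let ?R = "\<lambda>n. \<Sum>t\<in>{1..<length w}. word_prob b t (\<lambda>a. suffix w (X @ a)) * survival (n + length w - t)"
  have "(\<lambda>n. 1 - ?R n - (\<Sum>i\<le>n. survival i) / real b ^ length w)
      \<longlonglongrightarrow> 1 - 0 - real b ^ length w / real b ^ length w"
    using survival_sums alphabet_pos unfolding sums_def_le
    by (intro tendsto_intros renewal_remainder_tendsto_zero) auto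
  moreover have "word_prob b (n + length w) (\<lambda>u. occ w (X @ u) = occ w X)
      = 1 - ?R n - (\<Sum>i\<le>n. survival i) / real b ^ length w" for n
    using renewal_identity[of n X] by linarith
  ultimately show "(\<lambda>n. word_prob b (n + length w) (\<lambda>u. occ w (X @ u) = occ w X)) \<longlonglongrightarrow> 0"
    using alphabet_pos by simp
qed

lemma hitting_nonneg: "0 \<le> hitting X j t"
  unfolding hitting_def by (rule word_prob_nonneg)

lemma occurrence_count_convolution:
  assumes "occ w X < j"
  shows "word_prob b N (\<lambda>u. occ w (X @ u) = j) = (\<Sum>t\<le>N. hitting X j t * survival (N - t))"
proof -
  have "word_prob b N (\<lambda>u. occ w (X @ u) = j) = word_prob b N (\<lambda>u. occ w (X @ u) \<in> {j})"
    by simp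
  also have "\<dots> = (\<Sum>t=1..N. hitting X j t * survival (N - t))"
    unfolding last_occurrence_decomposition hitting_def using assms by simp
  moreover have "hitting X j 0 = 0"
    using assms unfolding hitting_def by (simp add: word_prob_Nil)
  ultimately show ?thesis
    by (simp add: atMost_atLeast0 sum.atLeast_Suc_atMost[of 0 N])
qed

lemma at_least_prob_eq_sum_hitting:
  assumes "occ w X < j"
  shows "word_prob b N (\<lambda>u. j \<le> occ w (X @ u)) = (\<Sum>t\<le>N. hitting X j t)"
proof (induction N)
  case 0
  have "word_prob b 0 (\<lambda>u. j \<le> occ w (X @ u)) = 0" "hitting X j 0 = 0"
    using assms by (simp_all add: word_prob_Nil hitting_def)
  then show ?case by simp
next
  case (Suc N)
  have snoc: "occ w (X @ u) = occ w (X @ take N u) + (if suffix w (X @ u) then 1 else 0)"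
    if len: "length u = Suc N" for u
  proof -
    obtain v x where u: "u = v @ [x]" using len by (cases u rule: rev_cases) auto
    with len have "take N u = v" by simp
    then show ?thesis using occ_snoc[OF pattern_nonempty, of "X @ v" x] u by simp
  qed
  have "word_prob b (Suc N) (\<lambda>u. j \<le> occ w (X @ u))
      = word_prob b (Suc N) (\<lambda>u. j \<le> occ w (X @ take N u) \<or> (suffix w (X @ u) \<and> occ w (X @ u) = j))"
    by (intro word_prob_cong) (auto simp: words_def snoc)
  also have "\<dots> = word_prob b (Suc N) (\<lambda>u. j \<le> occ w (X @ take N u)) + hitting X j (Suc N)"
    unfolding hitting_def by (intro word_prob_disj) (auto simp: words_def snoc)
  also have "word_prob b (Suc N) (\<lambda>u. j \<le> occ w (X @ take N u)) = word_prob b N (\<lambda>a. j \<le> occ w (X @ a))"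
    using word_prob_append[of b N 1 "\<lambda>a. j \<le> occ w (X @ a)" "\<lambda>_. True"]
    by (simp add: word_prob_True[OF alphabet_pos])
  finally show ?case using Suc.IH by simp
qed

lemma summable_hitting:
  assumes "occ w X < j"
  shows "summable (hitting X j)"
proof (rule summableI_nonneg_bounded[where x = 1])
  fix n
  have "(\<Sum>t<n. hitting X j t) \<le> (\<Sum>t\<le>n. hitting X j t)"
    by (intro sum_mono2) (auto simp: hitting_nonneg)
  also have "\<dots> \<le> 1"
    by (simp only: at_least_prob_eq_sum_hitting[OF assms, symmetric] word_prob_le_one[OF alphabet_pos])
  finally show "(\<Sum>t<n. hitting X j t) \<le> 1" .
qed (rule hitting_nonneg)

lemma occurrence_count_sums_product:
  assumes "occ w X < j"
  shows "(\<lambda>N. word_prob b N (\<lambda>u. occ w (X @ u) = j)) sums (suminf (hitting X j) * real b ^ length w)"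
proof -
  have "(\<lambda>N. \<Sum>t\<le>N. hitting X j t * survival (N - t)) sums (suminf (hitting X j) * suminf survival)"
    by (rule Cauchy_product_sums)
       (simp_all add: hitting_nonneg survival_nonneg summable_hitting[OF assms] summable_survival)
  then show ?thesis
    using survival_sums by (simp add: occurrence_count_convolution[OF assms] sums_iff)
qed

lemma occurrence_count_tendsto_zero: "(\<lambda>N. word_prob b N (\<lambda>u. occ w (X @ u) = j)) \<longlonglongrightarrow> 0"
proof (cases "occ w X" j rule: linorder_cases)
  case less
  then show ?thesis
    by (rule summable_LIMSEQ_zero[OF sums_summable[OF occurrence_count_sums_product]])
next
  case equal
  then show ?thesis using no_new_occurrence_tendsto_zero[of X] by simp
next
  case greater
  then have "occ w (X @ u) \<noteq> j" for u using occ_le_occ_append[of w X u] by simp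
  then have "word_prob b N (\<lambda>u. occ w (X @ u) = j) = word_prob b N (\<lambda>_. False)" for N
    by (intro word_prob_cong) simp
  then show ?thesis by (simp add: word_prob_False)
qed

lemma hitting_sums_one:
  assumes "occ w X < j"
  shows "hitting X j sums 1"
proof -
  have "word_prob b N (\<lambda>u. j \<le> occ w (X @ u)) = 1 - (\<Sum>i<j. word_prob b N (\<lambda>u. occ w (X @ u) = i))"
    for N
  proof -
    have "1 = word_prob b N (\<lambda>_. True)" using word_prob_True[OF alphabet_pos] by simp
    also have "\<dots> = word_prob b N (\<lambda>u. j \<le> occ w (X @ u) \<or> (\<exists>i\<in>{..<j}. occ w (X @ u) = i))"
      by (intro word_prob_cong) auto
    also have "\<dots> = word_prob b N (\<lambda>u. j \<le> occ w (X @ u))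
        + word_prob b N (\<lambda>u. \<exists>i\<in>{..<j}. occ w (X @ u) = i)"
      by (intro word_prob_disj) auto
    also have "word_prob b N (\<lambda>u. \<exists>i\<in>{..<j}. occ w (X @ u) = i)
        = (\<Sum>i<j. word_prob b N (\<lambda>u. occ w (X @ u) = i))"
      by (intro word_prob_Bex) auto
    finally show ?thesis by simp
  qed
  moreover have "(\<lambda>N. 1 - (\<Sum>i<j. word_prob b N (\<lambda>u. occ w (X @ u) = i))) \<longlonglongrightarrow> 1 - (\<Sum>i<j. 0)"
    by (intro tendsto_diff tendsto_const tendsto_sum occurrence_count_tendsto_zero)
  ultimately show ?thesis
    by (simp add: sums_def_le flip: at_least_prob_eq_sum_hitting[OF assms])
qed

lemma occurrence_count_sums:
  assumes "occ w X < k"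
  shows "(\<lambda>N. word_prob b N (\<lambda>u. occ w (X @ u) = k)) sums real b ^ length w"
  using occurrence_count_sums_product[OF assms] hitting_sums_one[OF assms] by (simp add: sums_iff)

lemma has_sum_extensions:
  assumes "X \<in> strings b" "occ w X < k"
  shows "((\<lambda>Y. (1 / real b) ^ length Y) has_sum (real b ^ length w * (1 / real b) ^ length X))
           {Y \<in> strings b. occ w Y = k \<and> (\<exists>u. Y = X @ u)}"
proof -
  let ?A = "{u \<in> strings b. occ w (X @ u) = k}"
  have fibre: "{u \<in> ?A. length u = m} = {u \<in> words b m. occ w (X @ u) = k}" for m
    by (auto simp: words_def)
  have "((\<lambda>u. (1 / real b) ^ length u) has_sum real b ^ length w) ?A"
  proof (rule has_sum_by_fibres[where \<phi> = length])
    have "(\<Sum>u\<in>{u \<in> ?A. length u = m}. (1 / real b) ^ length u)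
        = (\<Sum>u\<in>{u \<in> words b m. occ w (X @ u) = k}. (1 / real b) ^ m)" for m
      unfolding fibre by (rule sum.cong) (auto simp: words_def)
    then have "(\<Sum>u\<in>{u \<in> ?A. length u = m}. (1 / real b) ^ length u) = word_prob b m (\<lambda>u. occ w (X @ u) = k)"
      for m by (simp add: word_prob_def power_one_over)
    then show "(\<lambda>m. \<Sum>u\<in>{u \<in> ?A. length u = m}. (1 / real b) ^ length u) sums real b ^ length w"
      using occurrence_count_sums[OF assms(2)] by simp
    show "finite {u \<in> ?A. length u = m}" for m unfolding fibre by simp
  qed simp
  then have "((\<lambda>u. (1 / real b) ^ length (X @ u)) has_sum (real b ^ length w * (1 / real b) ^ length X)) ?A"
    using has_sum_cmult_right[of _ _ _ "(1 / real b) ^ length X"] by (simp add: power_add mult.commute)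
  then have "((\<lambda>Y. (1 / real b) ^ length Y) has_sum (real b ^ length w * (1 / real b) ^ length X))
      ((@) X ` ?A)"
    by (subst has_sum_reindex) (auto simp: inj_on_def comp_def)
  moreover have "(@) X ` ?A = {Y \<in> strings b. occ w Y = k \<and> (\<exists>u. Y = X @ u)}"
    using assms(1) by (auto simp: strings_def subset_iff)
  ultimately show ?thesis by simp
qed

lemma occ_le_kstar: "occ w s \<le> kstar b w s"
proof -
  let ?z = "replicate (length w - 1) 0"
  have "{occ w (s @ z) | z. z \<in> strings b \<and> length z = length w - 1}
      = (\<lambda>z. occ w (s @ z)) ` words b (length w - 1)"
    by (auto simp: words_def)
  moreover have "?z \<in> words b (length w - 1)"
    using alphabet_pos by (simp add: words_def strings_def set_replicate_conv_if)
  ultimately have "occ w (s @ ?z) \<le> kstar b w s"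
    unfolding kstar_def by (intro Max_ge) auto
  then show ?thesis using occ_le_occ_append[of w s ?z] by simp
qed

end

theorem theorem3:
  fixes b :: nat and w s :: "nat list"
  assumes "b \<ge> 2" and "w \<in> strings b" and "length w \<ge> 1" and "s \<in> strings b"
  shows "(\<forall>k::nat. k \<ge> 1 + kstar b w s \<longrightarrow>
           ((\<lambda>X. (1 / real b) ^ length X) has_sum
              (real b ^ length w * (1 / real b) ^ length s))
             {X \<in> strings b. occ w X = k \<and> (\<exists>u. X = s @ u)})
       \<and> (\<forall>k::nat. k \<ge> 1 \<longrightarrow>
           (\<lambda>l. real (Nw b w k l) * (1 / real b) ^ l) sums (real b ^ length w)
           \<and> Zw b w k (1 / real b) = real b ^ length w
           \<and> ((\<lambda>X. (1 / real b) ^ length X) has_sum real b ^ length w)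
               {X \<in> strings b. occ w X = k})"
proof -
  interpret pattern b w
    using assms by unfold_locales auto
  have prefix_part: "((\<lambda>X. (1 / real b) ^ length X) has_sum (real b ^ length w * (1 / real b) ^ length s))
      {X \<in> strings b. occ w X = k \<and> (\<exists>u. X = s @ u)}" if "k \<ge> 1 + kstar b w s" for k
    using has_sum_extensions[OF assms(4)] occ_le_kstar[of s] that by simp
  have Nw_eq: "real (Nw b w k l) * (1 / real b) ^ l = word_prob b l (\<lambda>u. occ w ([] @ u) = k)" for k l
  proof -
    have "{X \<in> strings b. length X = l \<and> occ w X = k} = {u \<in> words b l. occ w ([] @ u) = k}"
      by (auto simp: words_def)
    then show ?thesis unfolding Nw_def word_prob_def by (simp add: power_one_over)
  qed
  have "(\<lambda>l. real (Nw b w k l) * (1 / real b) ^ l) sums real b ^ length w" if "k \<ge> 1" for k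
    unfolding Nw_eq using occurrence_count_sums[of "[]" k] that by (simp add: pattern_nonempty)
  moreover have "((\<lambda>X. (1 / real b) ^ length X) has_sum real b ^ length w) {X \<in> strings b. occ w X = k}"
    if "k \<ge> 1" for k
    using has_sum_extensions[of "[]" k] that by (simp add: strings_def pattern_nonempty)
  ultimately show ?thesis
    using prefix_part by (auto simp: Zw_def sums_iff)
qed

end
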